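(* For every $z\in\mathbb R$ there is a constant $C_z$ depending only on $z$ such that for all integers $q\ge1$ $$\left|\sum_{u=0}^{q}\sum_{k=0}^{u}\frac{\alpha_{k,u-k}}{k!(u-k)!}\frac{\beta_{q-u}(z)}{(q-u)!}\right|\le C_z\,2^{q}\frac{1}{\sqrt{(q-1)!}}.$$
   Context: $H_n$ are the probabilists' Hermite polynomials, $\phi$ the standard Gaussian density, $\beta_\ell(z):=\phi(z)H_\ell(z)$. For nonnegative integers $n,m$, $\alpha_{2n,2m}=\sqrt{\frac\pi2}\frac{(2n)!(2m)!}{n!m!}\frac{1}{2^{n+m}}\sum_{i=0}^{n+m}(-1)^{i+n+m}\binom{n+m}{i}\frac{(2i+1)!}{(i!)^2}\frac1{4^i}$, and $\alpha_{k,l}=0$ unless $k$ and $l$ are both even. *)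

theory Defs
  imports "HOL-Analysis.Analysis"
begin

fun hermite_prob :: "nat \<Rightarrow> real \<Rightarrow> real" where
  "hermite_prob 0 x = 1"
| "hermite_prob (Suc 0) x = x"
| "hermite_prob (Suc (Suc n)) x = x * hermite_prob (Suc n) x - real (Suc n) * hermite_prob n x"

definition std_gauss_density :: "real \<Rightarrow> real" where
  "std_gauss_density z = exp (- (z^2) / 2) / sqrt (2 * pi)"

definition beta_fn :: "nat \<Rightarrow> real \<Rightarrow> real" where
  "beta_fn l z = std_gauss_density z * hermite_prob l z"

definition alpha_even :: "nat \<Rightarrow> nat \<Rightarrow> real" where
  "alpha_even n m = sqrt (pi / 2) * (fact (2*n) * fact (2*m) / (fact n * fact m))
     * (1 / 2 ^ (n + m))
     * (\<Sum>i=0..n+m. (-1) ^ (i + n + m) * real ((n + m) choose i)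
          * (fact (2*i+1) / (fact i)^2) * (1 / 4 ^ i))"

definition alpha_coef :: "nat \<Rightarrow> nat \<Rightarrow> real" where
  "alpha_coef k l = (if even k \<and> even l then alpha_even (k div 2) (l div 2) else 0)"

end

theory Submission
  imports Defs
begin

text \<open>
  The alternating sum inside alpha(2n, 2m) is the (n+m)-th forward difference at 0 of
  j \<mapsto> (j + 1/2 choose j), which Pascal's rule telescopes to (1/2 choose n+m), of modulus
  at most 1. Hence the inner sum over k vanishes for odd u and is at most sqrt(pi/2) / N!
  for u = 2N. The three-term recurrence gives |He n z| \<le> K_z sqrt((3/2)^n n!). With
  a = q - u, the estimates q! \<le> 2^q a! (2N)! and (2N)! \<le> 4^N (N!)^2 bound the u-th
  summand by a constant times (3/4)^(a/2) 2^q / sqrt(q!), and the geometric series in a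
  converges.
\<close>

text \<open>The sign (-1)^(i + N) has the parity of N - i without truncated subtraction; it is the
  sign used in alpha_even.\<close>
definition forward_diff :: "(nat \<Rightarrow> 'a::comm_ring_1) \<Rightarrow> nat \<Rightarrow> nat \<Rightarrow> 'a" where
  "forward_diff F N m = (\<Sum>i=0..N. (-1) ^ (i + N) * of_nat (N choose i) * F (m + i))"

lemma forward_diff_0 [simp]: "forward_diff F 0 m = F m"
  by (simp add: forward_diff_def)

lemma forward_diff_Suc:
  "forward_diff F (Suc N) m = forward_diff F N (Suc m) - forward_diff F N m"
proof -
  let ?t = "\<lambda>k i. (-1) ^ (i + N) * of_nat (N choose k) * F (m + Suc i)"
  have "forward_diff F (Suc N) m
      = (-1) ^ Suc N * F m + (\<Sum>i=0..N. ?t i i) + (\<Sum>i=0..N. ?t (Suc i) i)"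
    unfolding forward_diff_def
    by (subst sum.atLeast0_atMost_Suc_shift) (simp add: sum.distrib algebra_simps)
  moreover have "(\<Sum>i=0..N. ?t i i) = forward_diff F N (Suc m)"
    unfolding forward_diff_def by simp
  moreover have "- forward_diff F N m = (-1) ^ Suc N * F m + (\<Sum>i=0..N. ?t (Suc i) i)"
  proof -
    have "forward_diff F N m = (\<Sum>i=0..Suc N. (-1) ^ (i + N) * of_nat (N choose i) * F (m + i))"
      unfolding forward_diff_def by (simp add: binomial_eq_0)
    then show ?thesis
      by (subst (asm) sum.atLeast0_atMost_Suc_shift) (simp add: sum_negf[symmetric])
  qed
  ultimately show ?thesis
    by (simp add: algebra_simps)
qed

lemma forward_diff_gchoose:
  fixes a :: "'a::field_char_0"
  shows "forward_diff (\<lambda>j. (of_nat j + a) gchoose j) N m = (of_nat m + a) gchoose (m + N)"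
proof (induction N arbitrary: m)
  case (Suc N)
  have "forward_diff (\<lambda>j. (of_nat j + a) gchoose j) (Suc N) m
      = ((of_nat m + a + 1) gchoose Suc (m + N)) - ((of_nat m + a) gchoose (m + N))"
    by (simp only: forward_diff_Suc Suc.IH) (simp add: algebra_simps)
  then show ?case
    by (simp add: gbinomial_Suc_Suc)
qed simp

lemma abs_half_gchoose_le_1: "\<bar>(1/2::real) gchoose N\<bar> \<le> 1"
proof (induction N)
  case (Suc N)
  have "(1/2::real) gchoose Suc N = ((1/2) gchoose N) * ((1/2 - of_nat N) / of_nat (Suc N))"
    using gbinomial_mult_1[of "1/2::real" N] by (simp add: field_simps)
  moreover have "\<bar>(1/2 - of_nat N) / of_nat (Suc N)\<bar> \<le> (1::real)"
    by (simp add: abs_if field_simps)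
  ultimately show ?case
    by (simp only: abs_mult mult_le_one[OF Suc.IH abs_ge_zero])
qed simp

lemma fact_odd_div_square_fact:
  "fact (2 * j + 1) / ((fact j)\<^sup>2 * 4 ^ j) = (of_nat j + 1/2 :: 'a::field_char_0) gchoose j"
proof -
  have "(fact (2 * j + 1) :: 'a) = pochhammer 2 (2 * j)"
    by (simp add: pochhammer_fact pochhammer_rec numeral_2_eq_2 del: pochhammer_Suc)
  also have "\<dots> = 4 ^ j * fact j * pochhammer (3/2) j"
    using pochhammer_double[of "1::'a" j] by (simp add: pochhammer_fact power_mult)
  finally show ?thesis
    by (simp add: gbinomial_pochhammer' power2_eq_square field_simps)
qed

lemma abs_alternating_sum_fact_odd_le_1:
  "\<bar>\<Sum>i=0..N. (-1) ^ (i + N) * real (N choose i) * (fact (2*i+1) / (fact i)^2) * (1 / 4 ^ i)\<bar> \<le> 1"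
proof -
  have "(\<Sum>i=0..N. (-1) ^ (i + N) * real (N choose i) * (fact (2*i+1) / (fact i)^2) * (1 / 4 ^ i))
      = forward_diff (\<lambda>j. (of_nat j + 1/2) gchoose j) N 0"
    unfolding forward_diff_def
    by (intro sum.cong refl) (simp add: fact_odd_div_square_fact[symmetric])
  also have "\<dots> = (1/2) gchoose N"
    by (simp add: forward_diff_gchoose)
  finally show ?thesis
    using abs_half_gchoose_le_1 by simp
qed

lemma abs_alpha_even_le:
  "\<bar>alpha_even n m\<bar> / (fact (2*n) * fact (2*m)) \<le> sqrt (pi/2) / (fact n * fact m * 2 ^ (n + m))"
proof -
  let ?D = "\<Sum>i=0..n+m. (-1) ^ (i + n + m) * real ((n + m) choose i)
      * (fact (2*i+1) / (fact i)^2) * (1 / 4 ^ i)"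
  have "\<bar>alpha_even n m\<bar> / (fact (2*n) * fact (2*m))
      = sqrt (pi/2) / (fact n * fact m * 2 ^ (n + m)) * \<bar>?D\<bar>"
    unfolding alpha_even_def by (simp add: abs_mult field_simps)
  also have "\<dots> \<le> sqrt (pi/2) / (fact n * fact m * 2 ^ (n + m)) * 1"
    using abs_alternating_sum_fact_odd_le_1[of "n + m"]
    by (intro mult_left_mono) (simp_all add: add_ac)
  finally show ?thesis
    by simp
qed

lemma sum_upto_double_eq_sum_evens:
  fixes g :: "nat \<Rightarrow> 'a::comm_monoid_add"
  assumes "\<And>k. odd k \<Longrightarrow> g k = 0"
  shows "(\<Sum>k=0..2*N. g k) = (\<Sum>n=0..N. g (2*n))"
proof (induction N)
  case (Suc N)
  have "{0..2 * Suc N} = insert (Suc (Suc (2*N))) (insert (Suc (2*N)) {0..2*N})"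
    by auto
  then show ?case
    using Suc assms[of "Suc (2*N)"] by (simp add: add_ac)
qed simp

lemma sum_inverse_fact_products:
  "(\<Sum>n=0..N. 1 / (fact n * fact (N - n))) = (2 ^ N / fact N :: 'a::field_char_0)"
proof -
  have "(\<Sum>n=0..N. 1 / (fact n * fact (N - n))) = (\<Sum>n=0..N. of_nat (N choose n) / (fact N :: 'a))"
    by (intro sum.cong refl) (simp add: binomial_fact)
  also have "\<dots> = 2 ^ N / fact N"
    by (simp add: sum_divide_distrib[symmetric] atLeast0AtMost choose_row_sum flip: of_nat_sum)
  finally show ?thesis .
qed

definition alpha_diag_sum :: "nat \<Rightarrow> real" where
  "alpha_diag_sum u = (\<Sum>k=0..u. alpha_coef k (u - k) / (fact k * fact (u - k)))"

lemma alpha_diag_sum_odd: "odd u \<Longrightarrow> alpha_diag_sum u = 0"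
  unfolding alpha_diag_sum_def alpha_coef_def by (intro sum.neutral) auto

lemma abs_alpha_diag_sum_even_le: "\<bar>alpha_diag_sum (2*N)\<bar> \<le> sqrt (pi/2) / fact N"
proof -
  let ?t = "\<lambda>k. \<bar>alpha_coef k (2*N - k) / (fact k * fact (2*N - k))\<bar>"
  have "\<bar>alpha_diag_sum (2*N)\<bar> \<le> (\<Sum>k=0..2*N. ?t k)"
    unfolding alpha_diag_sum_def by (rule sum_abs)
  also have "\<dots> = (\<Sum>n=0..N. ?t (2*n))"
    by (rule sum_upto_double_eq_sum_evens) (simp add: alpha_coef_def)
  also have "\<dots> \<le> (\<Sum>n=0..N. sqrt (pi/2) / (fact n * fact (N - n) * 2 ^ N))"
  proof (rule sum_mono)
    fix n assume "n \<in> {0..N}"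
    then have "?t (2*n) = \<bar>alpha_even n (N - n)\<bar> / (fact (2*n) * fact (2*(N - n)))"
      by (simp add: alpha_coef_def abs_mult flip: diff_mult_distrib2)
    also have "\<dots> \<le> sqrt (pi/2) / (fact n * fact (N - n) * 2 ^ N)"
      using abs_alpha_even_le[of n "N - n"] \<open>n \<in> {0..N}\<close> by simp
    finally show "?t (2*n) \<le> sqrt (pi/2) / (fact n * fact (N - n) * 2 ^ N)" .
  qed
  also have "\<dots> = sqrt (pi/2) / 2 ^ N * (\<Sum>n=0..N. 1 / (fact n * fact (N - n)))"
    by (simp add: sum_distrib_left mult_ac)
  also have "\<dots> = sqrt (pi/2) / fact N"
    by (simp add: sum_inverse_fact_products)
  finally show ?thesis .
qed

text \<open>Any base strictly between 1 and 2 would do: above 1 so that the weight eventually dominates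
  the Hermite recurrence, below 2 so that the summands decay geometrically in q - u.\<close>
definition hermite_weight :: "nat \<Rightarrow> real" where
  "hermite_weight n = sqrt ((3/2) ^ n * fact n)"

lemma hermite_weight_pos: "0 < hermite_weight n"
  unfolding hermite_weight_def by simp

lemma hermite_weight_recurrence_le:
  assumes "6 * z\<^sup>2 \<le> real m + 1"
  shows "\<bar>z\<bar> * hermite_weight (Suc m) + (real m + 1) * hermite_weight m
    \<le> hermite_weight (Suc (Suc m))"
proof -
  let ?w = "hermite_weight m"
  have w1: "hermite_weight (Suc m) = sqrt (3/2 * (real m + 1)) * ?w"
    unfolding hermite_weight_def by (simp add: real_sqrt_mult[symmetric] algebra_simps)
  have w2: "hermite_weight (Suc (Suc m)) = sqrt ((3/2)\<^sup>2 * ((real m + 1) * (real m + 2))) * ?w"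
    unfolding hermite_weight_def by (simp add: real_sqrt_mult[symmetric] algebra_simps power2_eq_square)
  have "\<bar>z\<bar> * sqrt (3/2 * (real m + 1)) = sqrt (z\<^sup>2 * (3/2 * (real m + 1)))"
    by (simp only: real_sqrt_mult real_sqrt_abs)
  also have "\<dots> \<le> sqrt (((real m + 1) / 2)\<^sup>2)"
    using mult_right_mono[OF assms, of "real m + 1"]
    by (intro real_sqrt_le_mono) (simp add: power2_eq_square field_simps)
  finally have z_term: "\<bar>z\<bar> * sqrt (3/2 * (real m + 1)) \<le> (real m + 1) / 2"
    by simp
  have "\<bar>z\<bar> * hermite_weight (Suc m) + (real m + 1) * ?w
      = (\<bar>z\<bar> * sqrt (3/2 * (real m + 1)) + (real m + 1)) * ?w"
    unfolding w1 by (simp add: algebra_simps)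
  also have "\<dots> \<le> 3/2 * (real m + 1) * ?w"
    using z_term hermite_weight_pos[of m] by (intro mult_right_mono) auto
  also have "3/2 * (real m + 1) = sqrt ((3/2)\<^sup>2 * (real m + 1)\<^sup>2)"
    by (simp add: real_sqrt_mult)
  also have "\<dots> * ?w \<le> sqrt ((3/2)\<^sup>2 * ((real m + 1) * (real m + 2))) * ?w"
    using hermite_weight_pos[of m]
    by (intro mult_right_mono real_sqrt_le_mono) (simp_all add: power2_eq_square)
  finally show ?thesis
    unfolding w2 .
qed

lemma hermite_prob_le_weight: "\<exists>K\<ge>0. \<forall>n. \<bar>hermite_prob n z\<bar> \<le> K * hermite_weight n"
proof -
  define n0 where "n0 = nat \<lceil>6 * z\<^sup>2\<rceil>"
  define K where "K = (\<Sum>j\<le>n0 + 1. \<bar>hermite_prob j z\<bar> / hermite_weight j)"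
  have ratio_nonneg: "0 \<le> \<bar>hermite_prob j z\<bar> / hermite_weight j" for j
    using hermite_weight_pos[of j] by simp
  have "0 \<le> K"
    unfolding K_def by (intro sum_nonneg ratio_nonneg)
  moreover have "\<bar>hermite_prob n z\<bar> \<le> K * hermite_weight n" for n
  proof (induction n rule: less_induct)
    case (less n)
    show ?case
    proof (cases "n \<le> n0 + 1")
      case True
      then have "\<bar>hermite_prob n z\<bar> / hermite_weight n \<le> K"
        unfolding K_def using ratio_nonneg by (intro member_le_sum) auto
      then show ?thesis
        using hermite_weight_pos[of n] by (simp add: field_simps)
    next
      case False
      define m where "m = n - 2"
      have n: "n = Suc (Suc m)" and "n0 \<le> m"
        using False unfolding m_def by auto
      moreover have "6 * z\<^sup>2 \<le> real n0"
        unfolding n0_def by linarith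
      ultimately have "6 * z\<^sup>2 \<le> real m + 1"
        by linarith
      have "\<bar>hermite_prob n z\<bar> \<le> \<bar>z\<bar> * \<bar>hermite_prob (Suc m) z\<bar> + (real m + 1) * \<bar>hermite_prob m z\<bar>"
        unfolding n
        using abs_triangle_ineq4[of "z * hermite_prob (Suc m) z" "(1 + real m) * hermite_prob m z"]
        by (simp add: abs_mult add.commute)
      also have "\<dots> \<le> \<bar>z\<bar> * (K * hermite_weight (Suc m)) + (real m + 1) * (K * hermite_weight m)"
        using less n by (intro add_mono mult_left_mono) auto
      also have "\<dots> = K * (\<bar>z\<bar> * hermite_weight (Suc m) + (real m + 1) * hermite_weight m)"
        by (simp add: algebra_simps)
      also have "\<dots> \<le> K * hermite_weight n"
        unfolding n using \<open>0 \<le> K\<close> \<open>6 * z\<^sup>2 \<le> real m + 1\<close>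
        by (intro mult_left_mono hermite_weight_recurrence_le)
      finally show ?thesis .
    qed
  qed
  ultimately show ?thesis
    by blast
qed

lemma fact_le_split_product:
  assumes "q = a + 2*N"
  shows "2 ^ a * fact q \<le> (4::nat) ^ q * fact a * (fact N)\<^sup>2"
proof -
  have "fact q = fact a * fact (2*N) * (q choose a)"
    using binomial_fact_lemma[of a q] assms by simp
  also have "fact (2*N) = fact N * fact N * ((2*N) choose N)"
    using binomial_fact_lemma[of N "2*N"] by simp
  finally have "2 ^ a * fact q = 2 ^ a * (fact a * (fact N)\<^sup>2 * ((2*N) choose N) * (q choose a))"
    by (simp add: power2_eq_square)
  also have "\<dots> \<le> 2 ^ a * (fact a * (fact N)\<^sup>2 * 2 ^ (2*N) * 2 ^ q)"
    by (intro mult_le_mono order.refl binomial_le_pow2)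
  also have "\<dots> = (2 ^ (a + 2*N) * 2 ^ q) * fact a * (fact N)\<^sup>2"
    by (simp add: power_add)
  also have "2 ^ (a + 2*N) * 2 ^ q = (4::nat) ^ q"
    using assms by (simp flip: power_mult_distrib)
  finally show ?thesis .
qed

lemma hermite_weight_div_fact_le:
  assumes "q = a + 2*N"
  shows "hermite_weight a / (fact N * fact a) \<le> sqrt (3/4) ^ a * 2 ^ q / sqrt (fact q)"
proof (rule power2_le_imp_le)
  have "(2::real) ^ a * fact q \<le> 4 ^ q * fact a * (fact N)\<^sup>2"
    using of_nat_mono[OF fact_le_split_product[OF assms], where 'a = real] by simp
  then have "2 ^ a / (fact a * (fact N)\<^sup>2) \<le> (4::real) ^ q / fact q"
    by (simp add: divide_simps)
  then have "(3/4) ^ a * (2 ^ a / (fact a * (fact N)\<^sup>2)) \<le> (3/4::real) ^ a * (4 ^ q / fact q)"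
    by (rule mult_left_mono) simp
  moreover have "(hermite_weight a / (fact N * fact a))\<^sup>2 = (3/2) ^ a / (fact a * (fact N)\<^sup>2)"
    by (simp add: hermite_weight_def power_divide power_mult_distrib power2_eq_square)
  moreover have "(3/2::real) ^ a = (3/4) ^ a * 2 ^ a"
    by (simp flip: power_mult_distrib)
  moreover have "(sqrt (3/4) ^ a * 2 ^ q / sqrt (fact q))\<^sup>2
      = (sqrt (3/4) ^ a)\<^sup>2 * ((2::real) ^ q)\<^sup>2 / fact q"
    by (simp add: power_divide power_mult_distrib)
  moreover have "\<dots> = (sqrt (3/4) ^ 2) ^ a * (2 ^ 2) ^ q / fact q"
    by (simp only: power_even_eq[symmetric] power_mult)
  ultimately show "(hermite_weight a / (fact N * fact a))\<^sup>2 \<le> (sqrt (3/4) ^ a * 2 ^ q / sqrt (fact q))\<^sup>2"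
    by simp
qed simp

lemma abs_sum_le_geometric:
  fixes f :: "nat \<Rightarrow> real"
  assumes "0 \<le> \<rho>" "\<rho> < 1" and f: "\<And>u. u \<le> q \<Longrightarrow> \<bar>f u\<bar> \<le> B * \<rho> ^ (q - u)"
  shows "\<bar>\<Sum>u=0..q. f u\<bar> \<le> B / (1 - \<rho>)"
proof -
  have "0 \<le> B"
    using f[of q] by simp
  have "\<bar>\<Sum>u=0..q. f u\<bar> \<le> (\<Sum>u=0..q. B * \<rho> ^ (q - u))"
    using f by (intro order.trans[OF sum_abs] sum_mono) auto
  also have "\<dots> = B * (\<Sum>u=0..q. \<rho> ^ (q - u))"
    by (simp add: sum_distrib_left)
  also have "(\<Sum>u=0..q. \<rho> ^ (q - u)) = (\<Sum>u=0..q. \<rho> ^ u)"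
    by (subst sum.atLeastAtMost_rev) (auto intro: sum.cong)
  also have "(\<Sum>u=0..q. \<rho> ^ u) = (1 - \<rho> ^ Suc q) / (1 - \<rho>)"
    using \<open>\<rho> < 1\<close> unfolding atLeast0AtMost lessThan_Suc_atMost[symmetric] sum_gp_strict by simp
  also have "B * \<dots> \<le> B * (1 / (1 - \<rho>))"
    using assms \<open>0 \<le> B\<close> by (intro mult_left_mono divide_right_mono) auto
  finally show ?thesis
    by simp
qed

lemma abs_alpha_diag_sum_mult_beta_le:
  "\<exists>P\<ge>0. \<forall>q u. u \<le> q \<longrightarrow> \<bar>alpha_diag_sum u * (beta_fn (q - u) z / fact (q - u))\<bar>
     \<le> P * 2 ^ q / sqrt (fact q) * sqrt (3/4) ^ (q - u)"
proof -
  obtain K where "0 \<le> K" and K: "\<And>n. \<bar>hermite_prob n z\<bar> \<le> K * hermite_weight n"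
    using hermite_prob_le_weight by blast
  define P where "P = sqrt (pi/2) * std_gauss_density z * K"
  have "0 \<le> P"
    unfolding P_def std_gauss_density_def using \<open>0 \<le> K\<close> by simp
  moreover have "\<bar>alpha_diag_sum u * (beta_fn (q - u) z / fact (q - u))\<bar>
      \<le> P * 2 ^ q / sqrt (fact q) * sqrt (3/4) ^ (q - u)" if "u \<le> q" for q u
  proof (cases "even u")
    case True
    then obtain N where u: "u = 2*N" by blast
    have "\<bar>alpha_diag_sum u * (beta_fn (q - u) z / fact (q - u))\<bar>
        = \<bar>alpha_diag_sum u\<bar> * (std_gauss_density z * \<bar>hermite_prob (q - u) z\<bar> / fact (q - u))"
      by (simp add: beta_fn_def std_gauss_density_def abs_mult)
    also have "\<dots> \<le> sqrt (pi/2) / fact N * (std_gauss_density z * (K * hermite_weight (q - u)) / fact (q - u))"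
      using abs_alpha_diag_sum_even_le[of N] K[of "q - u"] u
      by (intro mult_mono divide_right_mono mult_left_mono) (simp_all add: std_gauss_density_def)
    also have "\<dots> = P * (hermite_weight (q - u) / (fact N * fact (q - u)))"
      by (simp add: P_def)
    also have "\<dots> \<le> P * (sqrt (3/4) ^ (q - u) * 2 ^ q / sqrt (fact q))"
      using \<open>0 \<le> P\<close> \<open>u \<le> q\<close> u by (intro mult_left_mono hermite_weight_div_fact_le) auto
    finally show ?thesis
      by (simp add: mult_ac)
  qed (use \<open>0 \<le> P\<close> in \<open>simp add: alpha_diag_sum_odd\<close>)
  ultimately show ?thesis
    by blast
qed

theorem mainTheorem12:
  shows "\<forall>z::real. \<exists>C::real. \<forall>q::nat. q \<ge> 1 \<longrightarrow>
    \<bar>\<Sum>u=0..q. \<Sum>k=0..u. alpha_coef k (u - k) / (fact k * fact (u - k))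
        * (beta_fn (q - u) z / fact (q - u))\<bar>
    \<le> C * 2 ^ q * (1 / sqrt (fact (q - 1)))"
proof
  fix z :: real
  obtain P where "0 \<le> P" and P: "\<And>q u. u \<le> q \<Longrightarrow>
      \<bar>alpha_diag_sum u * (beta_fn (q - u) z / fact (q - u))\<bar>
        \<le> P * 2 ^ q / sqrt (fact q) * sqrt (3/4) ^ (q - u)"
    using abs_alpha_diag_sum_mult_beta_le by blast
  have "\<bar>\<Sum>u=0..q. \<Sum>k=0..u. alpha_coef k (u - k) / (fact k * fact (u - k))
        * (beta_fn (q - u) z / fact (q - u))\<bar>
      \<le> P / (1 - sqrt (3/4)) * 2 ^ q * (1 / sqrt (fact (q - 1)))" for q
  proof -
    have "\<bar>\<Sum>u=0..q. \<Sum>k=0..u. alpha_coef k (u - k) / (fact k * fact (u - k))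
          * (beta_fn (q - u) z / fact (q - u))\<bar>
        = \<bar>\<Sum>u=0..q. alpha_diag_sum u * (beta_fn (q - u) z / fact (q - u))\<bar>"
      unfolding alpha_diag_sum_def by (simp only: sum_distrib_right)
    also have "\<dots> \<le> P * 2 ^ q / sqrt (fact q) / (1 - sqrt (3/4))"
      by (rule abs_sum_le_geometric[OF _ _ P]) simp_all
    also have "\<dots> = P / (1 - sqrt (3/4)) * 2 ^ q * (1 / sqrt (fact q))"
      by simp
    also have "\<dots> \<le> P / (1 - sqrt (3/4)) * 2 ^ q * (1 / sqrt (fact (q - 1)))"
      using \<open>0 \<le> P\<close> by (intro mult_left_mono divide_left_mono real_sqrt_le_mono fact_mono) auto
    finally show ?thesis .
  qed
  then show "\<exists>C. \<forall>q. q \<ge> 1 \<longrightarrow> \<bar>\<Sum>u=0..q. \<Sum>k=0..u. alpha_coef k (u - k) / (fact k * fact (u - k))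
        * (beta_fn (q - u) z / fact (q - u))\<bar> \<le> C * 2 ^ q * (1 / sqrt (fact (q - 1)))"
    by blast
qed

end
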